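(* Let $\mathcal F$ be a family of finite graphs and let $I_{\mathcal F}\colon T_{\mathrm{Graph}}\leadsto\mathrm{Forb}_{T_{\mathrm{Graph}}}(\mathcal F)$ be the axiom-adding interpretation, where $\mathrm{Forb}_{T_{\mathrm{Graph}}}(\mathcal F)$ is the theory of graphs containing no induced copy of any member of $\mathcal F$. If $\mathcal F$ contains a complete graph, then $$\chi(I_{\mathcal F})=\max\bigl(\{\ell\in\mathbb{N}_+:\mathcal F\text{ contains no complete $\ell$-partite graph}\}\cup\{0\}\bigr)+1=\min\{\ell\in\mathbb{N}_+:\mathcal F\text{ contains a complete $\ell$-partite graph}\};$$ otherwise $\chi(I_{\mathcal F})=\infty$.
   Context: A complete graph is $K_n$ for some $n\ge 0$ (all pairs of distinct vertices adjacent). A graph $G$ is complete $\ell$-partite if there exists a function $f\colon V(G)\to[\ell]$ (not necessarily surjective, so parts may be empty) such that distinct vertices $v,w$ are adjacent iff $f(v)\neq f(w)$. Membership of a graph in $\mathcal F$ is up to isomorphism. For $T=\mathrm{Forb}_{T_{\mathrm{Graph}}}(\mathcal F)$ and $I=I_{\mathcal F}$, $I(N)=N$ and $\chi(I)=\sup(\{\ell\in\mathbb{N}_+:\forall n\in\mathbb{N}\ \exists N\in\mathcal M_n[T],\ T_{n,\ell}\subseteq I(N)\}\cup\{0\})+1$, where $\mathcal M_n[T]$ is the set of $n$-vertex models of $T$ up to isomorphism, $T_{n,\ell}$ is the complete $\ell$-partite graph on $n$ vertices with parts of sizes $\lfloor n/\ell\rfloor$ or $\lceil n/\ell\rceil$,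 and $G\subseteq H$ means there is an injection $V(G)\to V(H)$ mapping edges to edges. *)

theory Defs
  imports Main "HOL-Library.Extended_Nat"
begin

text \<open>Finite simple graphs: a vertex set together with an adjacency relation.
  Vertices are natural numbers (every finite graph is isomorphic to one of these).\<close>
type_synonym graph = "nat set \<times> (nat \<Rightarrow> nat \<Rightarrow> bool)"

definition verts :: "graph \<Rightarrow> nat set" where "verts G = fst G"
definition adj :: "graph \<Rightarrow> nat \<Rightarrow> nat \<Rightarrow> bool" where "adj G = snd G"

definition is_graph :: "graph \<Rightarrow> bool" where
  "is_graph G \<longleftrightarrow> finite (verts G)
     \<and> (\<forall>x y. adj G x y \<longrightarrow> x \<in> verts G \<and> y \<in> verts G)
     \<and> (\<forall>x y. adj G x y \<longrightarrow> adj G y x)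
     \<and> (\<forall>x. \<not> adj G x x)"

definition induced_sub :: "graph \<Rightarrow> graph \<Rightarrow> bool" where
  "induced_sub G H \<longleftrightarrow> (\<exists>f. inj_on f (verts G) \<and> f ` verts G \<subseteq> verts H
     \<and> (\<forall>x\<in>verts G. \<forall>y\<in>verts G. adj G x y \<longleftrightarrow> adj H (f x) (f y)))"

definition subgraph :: "graph \<Rightarrow> graph \<Rightarrow> bool" where
  "subgraph G H \<longleftrightarrow> (\<exists>f. inj_on f (verts G) \<and> f ` verts G \<subseteq> verts H
     \<and> (\<forall>x\<in>verts G. \<forall>y\<in>verts G. adj G x y \<longrightarrow> adj H (f x) (f y)))"

text \<open>Models of Forb(F): graphs containing no induced copy of a member of F.\<close>
definition forb :: "graph set \<Rightarrow> graph \<Rightarrow> bool" where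
  "forb F H \<longleftrightarrow> is_graph H \<and> (\<forall>G\<in>F. \<not> induced_sub G H)"

definition complete_graph :: "graph \<Rightarrow> bool" where
  "complete_graph G \<longleftrightarrow> (\<forall>x\<in>verts G. \<forall>y\<in>verts G. x \<noteq> y \<longrightarrow> adj G x y)"

text \<open>Complete l-partite (parts may be empty).\<close>
definition complete_partite :: "nat \<Rightarrow> graph \<Rightarrow> bool" where
  "complete_partite l G \<longleftrightarrow> (\<exists>f. (\<forall>v\<in>verts G. f v \<in> {1..l}) \<and>
     (\<forall>v\<in>verts G. \<forall>w\<in>verts G. v \<noteq> w \<longrightarrow> (adj G v w \<longleftrightarrow> f v \<noteq> f w)))"

text \<open>Turan graph T(n,l): vertices 0..n-1, parts given by residue mod l
  (part sizes floor(n/l) or ceil(n/l)).\<close>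
definition turan :: "nat \<Rightarrow> nat \<Rightarrow> graph" where
  "turan n l = ({0..<n}, \<lambda>i j. i < n \<and> j < n \<and> i mod l \<noteq> j mod l)"

definition chi_set :: "graph set \<Rightarrow> nat set" where
  "chi_set F = {l. l \<ge> 1 \<and> (\<forall>n. \<exists>N. forb F N \<and> card (verts N) = n \<and> subgraph (turan n l) N)}"

definition chi :: "graph set \<Rightarrow> enat" where
  "chi F = Sup (enat ` chi_set F \<union> {0}) + 1"

end

theory Submission
  imports Defs "HOL-Library.Ramsey"
begin

text \<open>Let \<open>L\<close> be the least \<open>l \<ge> 1\<close> such that \<open>\<F>\<close> contains a complete \<open>l\<close>-partite graph;
  it exists because a complete graph on \<open>m\<close> vertices is complete \<open>max 1 m\<close>-partite.
  For \<open>l < L\<close> the Turan graphs \<open>T(n,l)\<close> themselves are models, since their induced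
  subgraphs are complete \<open>l\<close>-partite. For \<open>l \<ge> L\<close> pick a complete \<open>l\<close>-partite \<open>G \<in> \<F>\<close>.
  A model of \<open>Forb(\<F>)\<close> has no clique of the size of the complete graph in \<open>\<F>\<close>, so by
  Ramsey's theorem each of the \<open>l\<close> parts of a copy of \<open>T(lr,l)\<close> in it contains an
  independent set of size \<open>|G|\<close> once \<open>r\<close> is large; these \<open>l\<close> sets are pairwise completely
  joined and therefore contain \<open>G\<close> as an induced subgraph. If \<open>\<F>\<close> has no complete graph,
  the complete graphs \<open>K\<^sub>n\<close> are models containing every \<open>T(n,l)\<close>.\<close>

lemma is_graph_finite: "is_graph G \<Longrightarrow> finite (verts G)"
  by (simp add: is_graph_def)

lemma is_graph_irrefl: "is_graph G \<Longrightarrow> \<not> adj G x x"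
  by (simp add: is_graph_def)

lemma is_graph_sym: "is_graph G \<Longrightarrow> adj G x y \<Longrightarrow> adj G y x"
  by (simp add: is_graph_def)

lemma complete_partite_mono:
  assumes "complete_partite l G" "l \<le> l'"
  shows "complete_partite l' G"
proof -
  obtain f where "\<forall>v\<in>verts G. f v \<in> {1..l}"
    "\<forall>v\<in>verts G. \<forall>w\<in>verts G. v \<noteq> w \<longrightarrow> (adj G v w \<longleftrightarrow> f v \<noteq> f w)"
    using assms(1) unfolding complete_partite_def by blast
  then show ?thesis unfolding complete_partite_def using assms(2)
    by (intro exI[of _ f]) auto
qed

lemma complete_graph_complete_partite:
  assumes "is_graph G" "complete_graph G"
  shows "complete_partite (card (verts G)) G"
proof -
  obtain f where f: "bij_betw f (verts G) {0..<card (verts G)}"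
    using ex_bij_betw_finite_nat is_graph_finite[OF assms(1)] by blast
  show ?thesis unfolding complete_partite_def
  proof (intro exI[of _ "\<lambda>v. Suc (f v)"] conjI ballI impI)
    fix v assume "v \<in> verts G"
    then have "f v < card (verts G)" using f by (auto simp: bij_betw_def)
    then show "Suc (f v) \<in> {1..card (verts G)}" by simp
  next
    fix v w assume "v \<in> verts G" "w \<in> verts G" "v \<noteq> w"
    then show "adj G v w \<longleftrightarrow> Suc (f v) \<noteq> Suc (f w)"
      using f assms(2) by (auto simp: complete_graph_def bij_betw_def inj_on_def)
  qed
qed

lemma induced_sub_complete_partite:
  assumes "induced_sub G H" "complete_partite l H"
  shows "complete_partite l G"
proof -
  obtain h where h: "inj_on h (verts G)" "h ` verts G \<subseteq> verts H"
    "\<forall>x\<in>verts G. \<forall>y\<in>verts G. adj G x y \<longleftrightarrow> adj H (h x) (h y)"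
    using assms(1) unfolding induced_sub_def by blast
  obtain f where f: "\<forall>v\<in>verts H. f v \<in> {1..l}"
    "\<forall>v\<in>verts H. \<forall>w\<in>verts H. v \<noteq> w \<longrightarrow> (adj H v w \<longleftrightarrow> f v \<noteq> f w)"
    using assms(2) unfolding complete_partite_def by blast
  show ?thesis unfolding complete_partite_def
  proof (intro exI[of _ "f \<circ> h"] conjI ballI impI)
    fix v w assume "v \<in> verts G" "w \<in> verts G" "v \<noteq> w"
    moreover from this have "h v \<noteq> h w" using h(1) by (meson inj_onD)
    moreover from calculation have "h v \<in> verts H" "h w \<in> verts H" using h(2) by blast+
    ultimately show "adj G v w \<longleftrightarrow> (f \<circ> h) v \<noteq> (f \<circ> h) w"
      using h(3) f(2) by simp
  qed (use h(2) f(1) in auto)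
qed

lemma is_graph_turan: "is_graph (turan n l)"
  by (auto simp: is_graph_def turan_def verts_def adj_def)

lemma card_verts_turan: "card (verts (turan n l)) = n"
  by (simp add: turan_def verts_def)

lemma complete_partite_turan:
  assumes "1 \<le> l"
  shows "complete_partite l (turan n l)"
  unfolding complete_partite_def using assms
  by (intro exI[of _ "\<lambda>v. Suc (v mod l)"]) (auto simp: turan_def verts_def adj_def Suc_leI)

lemma subgraph_refl: "subgraph G G"
  unfolding subgraph_def by (intro exI[of _ id]) auto

lemma forb_turan:
  assumes "1 \<le> l" "\<forall>G\<in>F. \<not> complete_partite l G"
  shows "forb F (turan n l)"
  using assms is_graph_turan induced_sub_complete_partite complete_partite_turan
  unfolding forb_def by blast

definition complete_on :: "nat \<Rightarrow> graph" where
  "complete_on n = ({0..<n}, \<lambda>i j. i < n \<and> j < n \<and> i \<noteq> j)"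

lemma card_verts_complete_on: "card (verts (complete_on n)) = n"
  by (simp add: complete_on_def verts_def)

lemma turan_subgraph_complete_on: "subgraph (turan n l) (complete_on n)"
  unfolding subgraph_def
  by (intro exI[of _ id]) (auto simp: complete_on_def turan_def verts_def adj_def)

lemma forb_complete_on:
  assumes "\<forall>G\<in>F. \<not> complete_graph G"
  shows "forb F (complete_on n)"
proof -
  have "complete_graph G" if "induced_sub G (complete_on n)" for G
    using that by (auto simp: induced_sub_def complete_graph_def complete_on_def
        verts_def adj_def inj_on_def image_subset_iff)
  moreover have "is_graph (complete_on n)"
    by (auto simp: is_graph_def complete_on_def verts_def adj_def)
  ultimately show ?thesis using assms unfolding forb_def by blast
qed

lemma ramsey_graph:
  "\<exists>r. \<forall>N W. is_graph N \<longrightarrow> W \<subseteq> verts N \<longrightarrow> r \<le> card W \<longrightarrow>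
     (\<exists>R\<subseteq>W. card R = m \<and> (\<forall>x\<in>R. \<forall>y\<in>R. x \<noteq> y \<longrightarrow> adj N x y)
            \<or> card R = k \<and> (\<forall>x\<in>R. \<forall>y\<in>R. \<not> adj N x y))"
proof -
  have "\<exists>r\<ge>1. \<forall>(V::nat set) E. finite V \<and> r \<le> card V \<longrightarrow>
      (\<exists>R\<subseteq>V. card R = m \<and> clique R E \<or> card R = k \<and> indep R E)"
    by (rule ramsey2)
  then obtain r where r: "\<forall>(V::nat set) E. finite V \<and> r \<le> card V \<longrightarrow>
      (\<exists>R\<subseteq>V. card R = m \<and> clique R E \<or> card R = k \<and> indep R E)"
    by blast
  have "\<exists>R\<subseteq>W. card R = m \<and> (\<forall>x\<in>R. \<forall>y\<in>R. x \<noteq> y \<longrightarrow> adj N x y)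
            \<or> card R = k \<and> (\<forall>x\<in>R. \<forall>y\<in>R. \<not> adj N x y)"
    if N: "is_graph N" and W: "W \<subseteq> verts N" "r \<le> card W" for N W
  proof -
    define E where "E = {{x, y} | x y. adj N x y}"
    have edge: "{x, y} \<in> E \<longleftrightarrow> adj N x y" for x y
    proof
      assume "{x, y} \<in> E"
      then obtain a b where "{x, y} = {a, b}" and ab: "adj N a b" unfolding E_def by blast
      then have "x = a \<and> y = b \<or> x = b \<and> y = a" by (simp add: doubleton_eq_iff)
      then show "adj N x y" using is_graph_sym[OF N ab] ab by blast
    qed (auto simp: E_def)
    have "finite W" using W(1) is_graph_finite[OF N] finite_subset by blast
    then obtain R where R: "R \<subseteq> W" "card R = m \<and> clique R E \<or> card R = k \<and> indep R E"
      using r[rule_format, of W E] W(2) by blast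
    have clique_iff: "clique R E \<longleftrightarrow> (\<forall>x\<in>R. \<forall>y\<in>R. x \<noteq> y \<longrightarrow> adj N x y)"
      by (simp add: clique_def edge)
    have indep_iff: "indep R E \<longleftrightarrow> (\<forall>x\<in>R. \<forall>y\<in>R. \<not> adj N x y)"
      using is_graph_irrefl[OF N] by (auto simp: indep_def edge) metis
    show ?thesis using R unfolding clique_iff indep_iff by blast
  qed
  then show ?thesis by blast
qed

lemma induced_sub_of_clique:
  assumes "is_graph H" "complete_graph H" "is_graph N"
    and "R \<subseteq> verts N" "card R = card (verts H)" "\<forall>x\<in>R. \<forall>y\<in>R. x \<noteq> y \<longrightarrow> adj N x y"
  shows "induced_sub H N"
proof -
  have "finite R" using assms(3,4) is_graph_finite finite_subset by blast
  then obtain f where f: "bij_betw f (verts H) R"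
    using assms(1,5) is_graph_finite finite_same_card_bij by metis
  show ?thesis unfolding induced_sub_def
  proof (intro exI[of _ f] conjI ballI)
    fix x y assume xy: "x \<in> verts H" "y \<in> verts H"
    show "adj H x y \<longleftrightarrow> adj N (f x) (f y)"
    proof (cases "x = y")
      case True
      then show ?thesis using is_graph_irrefl assms(1,3) by metis
    next
      case False
      then have "f x \<noteq> f y" using f xy by (metis bij_betw_inv_into_left)
      moreover have "f x \<in> R" "f y \<in> R" using f xy bij_betwE by blast+
      ultimately show ?thesis using assms(2,6) xy False unfolding complete_graph_def by blast
    qed
  qed (use f assms(4) in \<open>auto simp: bij_betw_def\<close>)
qed

lemma forb_large_set_has_independent_subset:
  assumes "H \<in> F" "is_graph H" "complete_graph H"
  shows "\<exists>r. \<forall>N W. forb F N \<longrightarrow> W \<subseteq> verts N \<longrightarrow> r \<le> card W \<longrightarrow>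
           (\<exists>I\<subseteq>W. card I = m \<and> (\<forall>x\<in>I. \<forall>y\<in>I. \<not> adj N x y))"
proof -
  obtain r where r: "\<forall>N W. is_graph N \<longrightarrow> W \<subseteq> verts N \<longrightarrow> r \<le> card W \<longrightarrow>
     (\<exists>R\<subseteq>W. card R = card (verts H) \<and> (\<forall>x\<in>R. \<forall>y\<in>R. x \<noteq> y \<longrightarrow> adj N x y)
            \<or> card R = m \<and> (\<forall>x\<in>R. \<forall>y\<in>R. \<not> adj N x y))"
    using ramsey_graph[where m = "card (verts H)" and k = m] by blast
  have "\<exists>I\<subseteq>W. card I = m \<and> (\<forall>x\<in>I. \<forall>y\<in>I. \<not> adj N x y)"
    if N: "forb F N" and W: "W \<subseteq> verts N" "r \<le> card W" for N W
  proof -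
    have N_graph: "is_graph N" and no_H: "\<not> induced_sub H N"
      using N assms(1) unfolding forb_def by auto
    obtain R where R: "R \<subseteq> W"
      "card R = card (verts H) \<and> (\<forall>x\<in>R. \<forall>y\<in>R. x \<noteq> y \<longrightarrow> adj N x y)
         \<or> card R = m \<and> (\<forall>x\<in>R. \<forall>y\<in>R. \<not> adj N x y)"
      using r[rule_format, OF N_graph W] by blast
    have "R \<subseteq> verts N" using R(1) W(1) by blast
    then have "\<not> (card R = card (verts H) \<and> (\<forall>x\<in>R. \<forall>y\<in>R. x \<noteq> y \<longrightarrow> adj N x y))"
      using induced_sub_of_clique[OF assms(2,3) N_graph] no_H by blast
    then show ?thesis using R by blast
  qed
  then show ?thesis by blast
qed

lemma exists_classwise_injection:
  assumes "finite A" "\<And>a. a \<in> A \<Longrightarrow> finite (W (g a)) \<and> card A \<le> card (W (g a))"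
  shows "\<exists>\<phi>. (\<forall>a\<in>A. \<phi> a \<in> W (g a)) \<and> (\<forall>a\<in>A. \<forall>b\<in>A. g a = g b \<longrightarrow> \<phi> a = \<phi> b \<longrightarrow> a = b)"
proof -
  have "\<exists>f. f ` {b \<in> A. g b = c} \<subseteq> W c \<and> inj_on f {b \<in> A. g b = c}" if c: "c \<in> g ` A" for c
  proof -
    obtain a where a: "a \<in> A" "c = g a" using c by blast
    have "card {b \<in> A. g b = c} \<le> card A" using assms(1) by (intro card_mono) auto
    moreover have "finite (W c)" "card A \<le> card (W c)" using assms(2)[OF a(1)] a(2) by simp_all
    ultimately show ?thesis using assms(1) by (intro card_le_inj) auto
  qed
  then obtain f where f: "\<And>c. c \<in> g ` A \<Longrightarrow> f c ` {b \<in> A. g b = c} \<subseteq> W c \<and> inj_on (f c) {b \<in> A. g b = c}"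
    by metis
  show ?thesis
  proof (intro exI[of _ "\<lambda>a. f (g a) a"] conjI ballI impI)
    fix a assume "a \<in> A"
    then show "f (g a) a \<in> W (g a)" using f[of "g a"] by blast
  next
    fix a b assume "a \<in> A" "b \<in> A" "g a = g b" "f (g a) a = f (g b) b"
    then show "a = b" using f[of "g a"] by (auto dest: inj_onD)
  qed
qed

lemma induced_sub_of_independent_parts:
  assumes G: "is_graph G" "complete_partite l G" and N: "is_graph N"
    and parts: "\<And>c. c \<in> {1..l} \<Longrightarrow> W c \<subseteq> verts N \<and> card (verts G) \<le> card (W c)
                                   \<and> (\<forall>x\<in>W c. \<forall>y\<in>W c. \<not> adj N x y)"
    and joined: "\<And>c d x y. c \<in> {1..l} \<Longrightarrow> d \<in> {1..l} \<Longrightarrow> c \<noteq> d \<Longrightarrow> x \<in> W c \<Longrightarrow> y \<in> W d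
                            \<Longrightarrow> adj N x y"
  shows "induced_sub G N"
proof -
  obtain g where g: "\<forall>v\<in>verts G. g v \<in> {1..l}"
    "\<forall>v\<in>verts G. \<forall>w\<in>verts G. v \<noteq> w \<longrightarrow> (adj G v w \<longleftrightarrow> g v \<noteq> g w)"
    using G(2) unfolding complete_partite_def by blast
  have gl: "g v \<in> {1..l}" if "v \<in> verts G" for v
    using g(1) that by blast
  have "finite (W (g v)) \<and> card (verts G) \<le> card (W (g v))" if "v \<in> verts G" for v
    using parts[OF gl[OF that]] is_graph_finite[OF N] finite_subset by blast
  then obtain \<phi> where \<phi>: "\<forall>v\<in>verts G. \<phi> v \<in> W (g v)"
    "\<forall>v\<in>verts G. \<forall>w\<in>verts G. g v = g w \<longrightarrow> \<phi> v = \<phi> w \<longrightarrow> v = w"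
    using exists_classwise_injection[OF is_graph_finite[OF G(1)]] by blast
  have adj_iff: "adj G v w \<longleftrightarrow> adj N (\<phi> v) (\<phi> w)" and inj: "\<phi> v = \<phi> w \<longrightarrow> v = w"
    if v: "v \<in> verts G" and w: "w \<in> verts G" for v w
  proof -
    consider "v = w" | "v \<noteq> w" "g v = g w" | "g v \<noteq> g w" by blast
    then have "(adj G v w \<longleftrightarrow> adj N (\<phi> v) (\<phi> w)) \<and> (\<phi> v = \<phi> w \<longrightarrow> v = w)"
    proof cases
      case 1
      then show ?thesis using is_graph_irrefl[OF G(1)] is_graph_irrefl[OF N] by simp
    next
      case 2
      have "\<phi> v \<in> W (g v)" "\<phi> w \<in> W (g v)" using \<phi>(1) v w 2(2) by auto
      then have "\<not> adj N (\<phi> v) (\<phi> w)" using parts[OF gl[OF v]] by blast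
      moreover have "\<not> adj G v w" using g(2) v w 2 by blast
      ultimately show ?thesis using \<phi>(2) v w 2(2) by blast
    next
      case 3
      have "\<phi> v \<in> W (g v)" "\<phi> w \<in> W (g w)" using \<phi>(1) v w by auto
      then have "adj N (\<phi> v) (\<phi> w)" using joined[OF gl[OF v] gl[OF w] 3] by blast
      moreover have "v \<noteq> w" using 3 by auto
      then have "adj G v w" using g(2) v w 3 by blast
      ultimately show ?thesis using is_graph_irrefl[OF N, of "\<phi> v"] by auto
    qed
    then show "adj G v w \<longleftrightarrow> adj N (\<phi> v) (\<phi> w)" "\<phi> v = \<phi> w \<longrightarrow> v = w" by blast+
  qed
  have "inj_on \<phi> (verts G)" using inj by (meson inj_onI)
  moreover have "\<phi> ` verts G \<subseteq> verts N" using \<phi>(1) parts gl by blast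
  ultimately show ?thesis unfolding induced_sub_def using adj_iff by blast
qed

lemma turan_subgraph_parts:
  assumes "subgraph (turan (l * r) l) N"
  obtains W where "\<And>c. c \<in> {1..l} \<Longrightarrow> W c \<subseteq> verts N \<and> card (W c) = r"
    and "\<And>c d x y. c \<in> {1..l} \<Longrightarrow> d \<in> {1..l} \<Longrightarrow> c \<noteq> d \<Longrightarrow> x \<in> W c \<Longrightarrow> y \<in> W d \<Longrightarrow> adj N x y"
proof -
  obtain h where h: "inj_on h {0..<l * r}" "h ` {0..<l * r} \<subseteq> verts N"
    "\<forall>x\<in>{0..<l * r}. \<forall>y\<in>{0..<l * r}. adj (turan (l * r) l) x y \<longrightarrow> adj N (h x) (h y)"
    using assms unfolding subgraph_def by (auto simp: turan_def verts_def)
  define V where "V c = (\<lambda>t. c - 1 + l * t) ` {..<r}" for c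
  have V_sub: "V c \<subseteq> {0..<l * r}" and V_mod: "x \<in> V c \<Longrightarrow> x mod l = c - 1"
    if c: "c \<in> {1..l}" for c x
  proof -
    have "c - 1 < l" using c by auto
    then have residue: "(c - 1 + l * t) mod l = c - 1" and bound: "c - 1 + l * t < l * Suc t" for t
      by simp_all
    have "c - 1 + l * t < l * r" if "t < r" for t
      using bound[of t] mult_le_mono2[of "Suc t" r l] that by simp
    then show "V c \<subseteq> {0..<l * r}" unfolding V_def by auto
    show "x \<in> V c \<Longrightarrow> x mod l = c - 1" using residue unfolding V_def by auto
  qed
  have "card (h ` V c) = r" if "c \<in> {1..l}" for c
  proof -
    have "inj_on (\<lambda>t. c - 1 + l * t) {..<r}"
    proof (rule inj_onI)
      fix t u assume "c - 1 + l * t = c - 1 + l * u"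
      then have "l * t = l * u" by simp
      then show "t = u" using that by simp
    qed
    then have "card (V c) = r" unfolding V_def by (simp add: card_image)
    then show ?thesis using card_image inj_on_subset[OF h(1) V_sub[OF that]] by metis
  qed
  moreover have "adj N x y"
    if cd: "c \<in> {1..l}" "d \<in> {1..l}" "c \<noteq> d" and xy: "x \<in> h ` V c" "y \<in> h ` V d"
    for c d x y
  proof -
    obtain a b where ab: "a \<in> V c" "b \<in> V d" "x = h a" "y = h b" using xy by blast
    moreover have "a \<in> {0..<l * r}" "b \<in> {0..<l * r}" using ab cd V_sub by blast+
    moreover have "a mod l \<noteq> b mod l" using ab cd V_mod by force
    ultimately show ?thesis using h(3) by (auto simp: turan_def adj_def)
  qed
  ultimately show ?thesis using that[of "\<lambda>c. h ` V c"] h(2) V_sub by blast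
qed

lemma ex_turan_not_subgraph_forb:
  assumes "G \<in> F" "is_graph G" "complete_partite l G"
    and "H \<in> F" "is_graph H" "complete_graph H"
  shows "\<exists>n. \<forall>N. forb F N \<longrightarrow> \<not> subgraph (turan n l) N"
proof -
  obtain r where r: "\<forall>N W. forb F N \<longrightarrow> W \<subseteq> verts N \<longrightarrow> r \<le> card W \<longrightarrow>
      (\<exists>I\<subseteq>W. card I = card (verts G) \<and> (\<forall>x\<in>I. \<forall>y\<in>I. \<not> adj N x y))"
    using forb_large_set_has_independent_subset[OF assms(4-6)] by blast
  have "\<not> subgraph (turan (l * r) l) N" if N: "forb F N" for N
  proof
    assume "subgraph (turan (l * r) l) N"
    then obtain W where W: "\<And>c. c \<in> {1..l} \<Longrightarrow> W c \<subseteq> verts N \<and> card (W c) = r"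
      and joined: "\<And>c d x y. c \<in> {1..l} \<Longrightarrow> d \<in> {1..l} \<Longrightarrow> c \<noteq> d \<Longrightarrow> x \<in> W c \<Longrightarrow> y \<in> W d
                            \<Longrightarrow> adj N x y"
      by (rule turan_subgraph_parts) blast
    have "\<exists>I. I \<subseteq> W c \<and> card I = card (verts G) \<and> (\<forall>x\<in>I. \<forall>y\<in>I. \<not> adj N x y)"
      if "c \<in> {1..l}" for c
      using r[rule_format, OF N, of "W c"] W[OF that] by blast
    then obtain I where I: "\<And>c. c \<in> {1..l} \<Longrightarrow> I c \<subseteq> W c \<and> card (I c) = card (verts G)
                                         \<and> (\<forall>x\<in>I c. \<forall>y\<in>I c. \<not> adj N x y)"
      by metis
    have "induced_sub G N"
    proof (rule induced_sub_of_independent_parts[OF assms(2,3)])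
      show "is_graph N" using N unfolding forb_def by blast
      show "I c \<subseteq> verts N \<and> card (verts G) \<le> card (I c) \<and> (\<forall>x\<in>I c. \<forall>y\<in>I c. \<not> adj N x y)"
        if "c \<in> {1..l}" for c
        using I[OF that] W[OF that] by auto
      show "adj N x y"
        if "c \<in> {1..l}" "d \<in> {1..l}" "c \<noteq> d" "x \<in> I c" "y \<in> I d" for c d x y
        using that I joined by blast
    qed
    then show False using N assms(1) unfolding forb_def by blast
  qed
  then show ?thesis by blast
qed

lemma chi_set_eq_non_partite:
  assumes "\<forall>G\<in>F. is_graph G" "K \<in> F" "complete_graph K"
  shows "chi_set F = {l. 1 \<le> l \<and> (\<forall>G\<in>F. \<not> complete_partite l G)}"
proof (intro set_eqI iffI)
  fix l assume l: "l \<in> chi_set F"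
  have "\<not> complete_partite l G" if G: "G \<in> F" for G
  proof
    assume "complete_partite l G"
    from ex_turan_not_subgraph_forb[OF G bspec[OF assms(1) G] this
        assms(2) bspec[OF assms(1) assms(2)] assms(3)]
    obtain n where "\<forall>N. forb F N \<longrightarrow> \<not> subgraph (turan n l) N" ..
    moreover obtain N where "forb F N" "subgraph (turan n l) N"
      using l unfolding chi_set_def by blast
    ultimately show False by blast
  qed
  then show "l \<in> {l. 1 \<le> l \<and> (\<forall>G\<in>F. \<not> complete_partite l G)}"
    using l unfolding chi_set_def by blast
next
  fix l assume "l \<in> {l. 1 \<le> l \<and> (\<forall>G\<in>F. \<not> complete_partite l G)}"
  then have "1 \<le> l" and "forb F (turan n l)" for n
    using forb_turan by auto
  then show "l \<in> chi_set F"
    unfolding chi_set_def using card_verts_turan subgraph_refl by blast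
qed

lemma chi_set_eq_positive:
  assumes "\<forall>G\<in>F. \<not> complete_graph G"
  shows "chi_set F = {l. 1 \<le> l}"
proof -
  have "\<exists>N. forb F N \<and> card (verts N) = n \<and> subgraph (turan n l) N" for n l
    using forb_complete_on[OF assms] card_verts_complete_on turan_subgraph_complete_on by blast
  then show ?thesis unfolding chi_set_def by blast
qed

lemma chi_eq_enat:
  assumes "chi_set F = {1..<L}" "1 \<le> L"
  shows "chi F = enat L"
proof -
  have "chi_set F \<union> {0} = {..<L}" using assms by auto
  then have "enat ` chi_set F \<union> {0} = enat ` {..<L}"
    by (metis image_Un image_empty image_insert zero_enat_def)
  moreover have "Sup (enat ` {..<L}) = enat (L - 1)"
    using assms(2) by (intro cSup_eq_maximum) auto
  ultimately show ?thesis
    using assms(2) unfolding chi_def by (simp add: one_enat_def)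
qed

lemma chi_eq_infinity:
  assumes "infinite (chi_set F)"
  shows "chi F = \<infinity>"
proof -
  have "infinite (enat ` chi_set F)"
    using assms finite_imageD[of enat] by (auto simp: inj_on_def)
  then have "infinite (enat ` chi_set F \<union> {0})" by simp
  then show ?thesis unfolding chi_def Sup_enat_def by simp
qed

lemma upward_closed_iff_Least_le:
  fixes P :: "nat \<Rightarrow> bool"
  assumes "P k" "\<And>l l'. P l \<Longrightarrow> l \<le> l' \<Longrightarrow> P l'"
  shows "P l \<longleftrightarrow> (LEAST l. P l) \<le> l"
  using assms by (metis LeastI Least_le)

lemma complete_partite_member_iff_Least_le:
  assumes "\<forall>G\<in>F. is_graph G" "K \<in> F" "complete_graph K"
  shows "1 \<le> l \<and> (\<exists>G\<in>F. complete_partite l G)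
           \<longleftrightarrow> (LEAST l. 1 \<le> l \<and> (\<exists>G\<in>F. complete_partite l G)) \<le> l"
proof (rule upward_closed_iff_Least_le)
  have "complete_partite (max 1 (card (verts K))) K"
    using complete_graph_complete_partite[OF bspec[OF assms(1,2)] assms(3)]
    by (rule complete_partite_mono) simp
  then show "1 \<le> max 1 (card (verts K)) \<and> (\<exists>G\<in>F. complete_partite (max 1 (card (verts K))) G)"
    using assms(2) by auto
  show "1 \<le> l' \<and> (\<exists>G\<in>F. complete_partite l' G)"
    if "1 \<le> l \<and> (\<exists>G\<in>F. complete_partite l G)" "l \<le> l'" for l l'
    using that complete_partite_mono by (meson le_trans)
qed

theorem mainTheorem14:
  fixes F :: "graph set"
  assumes "\<forall>G\<in>F. is_graph G"
  shows "((\<exists>G\<in>F. complete_graph G) \<longrightarrow>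
            chi F = enat (Max ({l. l \<ge> 1 \<and> (\<forall>G\<in>F. \<not> complete_partite l G)} \<union> {0}) + 1)
          \<and> chi F = enat (LEAST l. l \<ge> 1 \<and> (\<exists>G\<in>F. complete_partite l G)))
       \<and> ((\<not> (\<exists>G\<in>F. complete_graph G)) \<longrightarrow> chi F = \<infinity>)"
proof (intro conjI impI)
  assume "\<exists>G\<in>F. complete_graph G"
  then obtain K where K: "K \<in> F" "complete_graph K" by blast
  define L where "L = (LEAST l. l \<ge> 1 \<and> (\<exists>G\<in>F. complete_partite l G))"
  note partite_iff = complete_partite_member_iff_Least_le[OF assms K, folded L_def]
  have "1 \<le> L" using partite_iff[of L] by simp
  have non_partite: "{l. l \<ge> 1 \<and> (\<forall>G\<in>F. \<not> complete_partite l G)} = {1..<L}"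
  proof (intro set_eqI)
    fix l show "l \<in> {l. l \<ge> 1 \<and> (\<forall>G\<in>F. \<not> complete_partite l G)} \<longleftrightarrow> l \<in> {1..<L}"
      using partite_iff[of l] by auto
  qed
  then have "chi_set F = {1..<L}" using chi_set_eq_non_partite[OF assms K] by simp
  then have chi_L: "chi F = enat L" using \<open>1 \<le> L\<close> by (rule chi_eq_enat)
  have "Max ({1..<L} \<union> {0}) = L - 1"
    using \<open>1 \<le> L\<close> by (intro Max_eqI) auto
  then show "chi F = enat (Max ({l. l \<ge> 1 \<and> (\<forall>G\<in>F. \<not> complete_partite l G)} \<union> {0}) + 1)"
    using chi_L \<open>1 \<le> L\<close> unfolding non_partite by simp
  show "chi F = enat (LEAST l. l \<ge> 1 \<and> (\<exists>G\<in>F. complete_partite l G))"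
    using chi_L unfolding L_def .
next
  assume "\<not> (\<exists>G\<in>F. complete_graph G)"
  then have "chi_set F = {l. 1 \<le> l}" using chi_set_eq_positive by blast
  moreover have "infinite {l :: nat. 1 \<le> l}"
    using infinite_Ici[of "1 :: nat"] unfolding atLeast_def .
  ultimately show "chi F = \<infinity>" using chi_eq_infinity by simp
qed

end
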